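(* Let $N\ge1$, let $A\in\{0,1\}^{N\times N}$ be the symmetric adjacency matrix of an undirected graph (top layer) and $L\in\mathbb{R}^{N\times N}$ the symmetric Laplacian matrix of an undirected graph (bottom layer), both on $[N]=\{1,\dots,N\}$, and let $K=\mathrm{diag}(\kappa_1,\dots,\kappa_N)$ with $\kappa_i\in\{0,1\}$. Let $\mathcal{G}_{\mathfrak{T}}$ (resp. $\mathcal{G}_{\mathfrak{B}}$) be the group of $N\times N$ permutation matrices commuting with $A$ (resp. $L$), and let $\mathcal{G}$ be the group of pairs $(P_{\mathfrak{T}},P_{\mathfrak{B}})\in\mathcal{G}_{\mathfrak{T}}\times\mathcal{G}_{\mathfrak{B}}$ with $P_{\mathfrak{B}}K=KP_{\mathfrak{T}}$. The top-layer clusters are the orbits of $[N]$ under the permutations $P_{\mathfrak{T}}$, and the bottom-layer clusters are the orbits of $[N]$ under the permutations $P_{\mathfrak{B}}$, as $(P_{\mathfrak{T}},P_{\mathfrak{B}})$ ranges over $\mathcal{G}$. Let $\mathcal{K}_{\mathfrak{B}}$ be a bottom-layer cluster of size $m$. Then exactly one of the following holds: (i) the cluster receives no inter-layer connections, i.e. $\kappa_i=0$ for all $i\in\mathcal{K}_{\mathfrak{B}}$; (ii) the cluster receives one-to-one inter-layer connections from a top-layer cluster of size at least $m$, i.e. $\kappa_i=1$ for all $i\in\mathcal{K}_{\mathfrak{B}}$ and the top-layer nodes $i\in\mathcal{K}_{\mathfrak{B}}$ all belong to a single top-layer cluster $\mathcal{K}_{\mathfrak{T}}$ with $|\mathcal{K}_{\mathfrak{T}}|\ge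 m$.
   Context: The setting is a duplex network: top-layer node $i$ is connected by a directed inter-layer link to bottom-layer node $i$ exactly when $\kappa_i=1$, and there are no other inter-layer links. The dynamics is $\dot x_i=\mathfrak{t}(x_i)+\alpha\sum_j A_{ij}\mathfrak{u}(x_j)$, $\dot y_i=\mathfrak{b}(y_i)-\beta\sum_j L_{ij}\mathfrak{c}(y_j)+\sigma\kappa_i D(x_i-y_i)$, and $\mathcal{G}$ is the group of symmetries (layer-preserving node permutations) under which this system is invariant. *)

theory Defs
  imports "HOL-Analysis.Analysis" "HOL-Combinatorics.Permutations"
begin

text \<open>Nodes [N] are the elements of a finite (nonempty) type 'n, so N = CARD('n) \<ge> 1.\<close>

definition perm_mat :: "('n::finite \<Rightarrow> 'n) \<Rightarrow> real^'n^'n" where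
  "perm_mat p = (\<chi> i j. if i = p j then 1 else 0)"

definition is_adjacency :: "real^'n^'n \<Rightarrow> bool" where
  "is_adjacency A \<longleftrightarrow> (\<forall>i j. A$i$j = A$j$i) \<and> (\<forall>i j. A$i$j = 0 \<or> A$i$j = 1)"

definition is_laplacian :: "real^'n::finite^'n \<Rightarrow> bool" where
  "is_laplacian L \<longleftrightarrow> (\<exists>W. is_adjacency W \<and> (\<forall>i. W$i$i = 0) \<and>
      (\<forall>i j. L$i$j = (if i = j then (\<Sum>k\<in>UNIV. W$i$k) else 0) - W$i$j))"

definition diag_mat :: "('n::finite \<Rightarrow> real) \<Rightarrow> real^'n^'n" where
  "diag_mat \<kappa> = (\<chi> i j. if i = j then \<kappa> i else 0)"

definition sym_group :: "real^'n::finite^'n \<Rightarrow> real^'n^'n \<Rightarrow> ('n \<Rightarrow> real)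
    \<Rightarrow> (('n \<Rightarrow> 'n) \<times> ('n \<Rightarrow> 'n)) set" where
  "sym_group A L \<kappa> = {(pT, pB). pT permutes UNIV \<and> pB permutes UNIV \<and>
      perm_mat pT ** A = A ** perm_mat pT \<and>
      perm_mat pB ** L = L ** perm_mat pB \<and>
      perm_mat pB ** diag_mat \<kappa> = diag_mat \<kappa> ** perm_mat pT}"

definition top_cluster :: "real^'n::finite^'n \<Rightarrow> real^'n^'n \<Rightarrow> ('n \<Rightarrow> real) \<Rightarrow> 'n \<Rightarrow> 'n set" where
  "top_cluster A L \<kappa> i = {fst g i | g. g \<in> sym_group A L \<kappa>}"

definition bottom_cluster :: "real^'n::finite^'n \<Rightarrow> real^'n^'n \<Rightarrow> ('n \<Rightarrow> real) \<Rightarrow> 'n \<Rightarrow> 'n set" where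
  "bottom_cluster A L \<kappa> i = {snd g i | g. g \<in> sym_group A L \<kappa>}"

end

theory Submission
  imports Defs
begin

text \<open>Read entrywise at position (p_B j, j), the intertwining relation P_B K = K P_T says
  \<kappa> j = [p_B j = p_T j] \<kappa> (p_B j). So p_B maps the nodes with an inter-layer link into
  themselves, hence (being injective on a finite set) onto themselves, and \<kappa> is invariant under
  every p_B: it is constant on each bottom-layer cluster. On a linked node p_B agrees with p_T,
  so the bottom-layer cluster of a linked node lies inside its top-layer cluster. The two
  alternatives exclude each other because a cluster contains its own base node.\<close>

lemma perm_mat_mult_diag_mat_entry:
  "(perm_mat p ** diag_mat \<kappa>)$i$j = (if i = p j then \<kappa> j else 0)"
proof -
  have "(perm_mat p ** diag_mat \<kappa>)$i$j
      = (\<Sum>k\<in>UNIV. (if i = p k then 1 else 0) * (if k = j then \<kappa> k else 0))"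
    by (simp add: matrix_matrix_mult_def perm_mat_def diag_mat_def)
  also have "\<dots> = (\<Sum>k\<in>UNIV. if k = j then (if i = p j then \<kappa> j else 0) else 0)"
    by (rule sum.cong) auto
  finally show ?thesis by simp
qed

lemma diag_mat_mult_perm_mat_entry:
  "(diag_mat \<kappa> ** perm_mat p)$i$j = (if i = p j then \<kappa> i else 0)"
proof -
  have "(diag_mat \<kappa> ** perm_mat p)$i$j
      = (\<Sum>k\<in>UNIV. (if i = k then \<kappa> i else 0) * (if k = p j then 1 else 0))"
    by (simp add: matrix_matrix_mult_def perm_mat_def diag_mat_def)
  also have "\<dots> = (\<Sum>k\<in>UNIV. if k = i then (if i = p j then \<kappa> i else 0) else 0)"
    by (rule sum.cong) auto
  finally show ?thesis by simp
qed

lemma perm_diag_intertwining_nonzero: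
  assumes "perm_mat q ** diag_mat \<kappa> = diag_mat \<kappa> ** perm_mat p" and "\<kappa> j \<noteq> 0"
  shows "q j = p j" and "\<kappa> (q j) = \<kappa> j"
proof -
  have "(perm_mat q ** diag_mat \<kappa>)$(q j)$j = (diag_mat \<kappa> ** perm_mat p)$(q j)$j"
    using assms(1) by simp
  then have "\<kappa> j = (if q j = p j then \<kappa> (q j) else 0)"
    by (simp add: perm_mat_mult_diag_mat_entry diag_mat_mult_perm_mat_entry)
  with assms(2) show "q j = p j" and "\<kappa> (q j) = \<kappa> j"
    by (auto split: if_splits)
qed

lemma perm_diag_intertwining_invariant:
  fixes q p :: "'n::finite \<Rightarrow> 'n"
  assumes intertw: "perm_mat q ** diag_mat \<kappa> = diag_mat \<kappa> ** perm_mat p"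
    and q: "q permutes UNIV"
  shows "\<kappa> (q j) = \<kappa> j"
proof (cases "\<kappa> j = 0")
  case True
  let ?S = "{i. \<kappa> i \<noteq> 0}"
  have inj: "inj q" using q permutes_inj by blast
  have "q ` ?S = ?S"
    using perm_diag_intertwining_nonzero(2)[OF intertw] inj
    by (intro endo_inj_surj) (auto simp: inj_on_def)
  then have "q j \<notin> ?S"
    using True inj by (auto dest: injD)
  with True show ?thesis by simp
next
  case False
  then show ?thesis using perm_diag_intertwining_nonzero(2)[OF intertw] by blast
qed

lemma id_mem_sym_group:
  fixes A :: "real^'n::finite^'n"
  shows "(id, id) \<in> sym_group A L \<kappa>"
proof -
  have "perm_mat (id :: 'n \<Rightarrow> 'n) = mat 1"
    by (simp add: perm_mat_def mat_def vec_eq_iff)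
  then show ?thesis
    unfolding sym_group_def by (simp add: permutes_id)
qed

lemma mem_bottom_cluster_self: "i \<in> bottom_cluster A L \<kappa> i"
proof -
  have "i = snd (id, id) i" by simp
  with id_mem_sym_group show ?thesis
    unfolding bottom_cluster_def by blast
qed

lemma bottom_cluster_kappa_eq:
  assumes "i \<in> bottom_cluster A L \<kappa> i0"
  shows "\<kappa> i = \<kappa> i0"
proof -
  obtain pT pB where g: "(pT, pB) \<in> sym_group A L \<kappa>" and i: "i = pB i0"
    using assms unfolding bottom_cluster_def by auto
  from g have "perm_mat pB ** diag_mat \<kappa> = diag_mat \<kappa> ** perm_mat pT" "pB permutes UNIV"
    by (simp_all add: sym_group_def)
  then show ?thesis
    unfolding i by (rule perm_diag_intertwining_invariant)
qed

lemma bottom_cluster_subset_top_cluster: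
  assumes "\<kappa> i0 \<noteq> 0"
  shows "bottom_cluster A L \<kappa> i0 \<subseteq> top_cluster A L \<kappa> i0"
proof
  fix i assume "i \<in> bottom_cluster A L \<kappa> i0"
  then obtain pT pB where g: "(pT, pB) \<in> sym_group A L \<kappa>" and i: "i = pB i0"
    unfolding bottom_cluster_def by auto
  from g have "perm_mat pB ** diag_mat \<kappa> = diag_mat \<kappa> ** perm_mat pT"
    by (simp add: sym_group_def)
  then have "i = fst (pT, pB) i0"
    unfolding i using assms by (simp add: perm_diag_intertwining_nonzero(1))
  with g show "i \<in> top_cluster A L \<kappa> i0"
    unfolding top_cluster_def by blast
qed

theorem corollary1:
  fixes A L :: "real^'n::finite^'n" and \<kappa> :: "'n \<Rightarrow> real" and i0 :: 'n
  assumes "is_adjacency A"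
    and "is_laplacian L"
    and "\<forall>i. \<kappa> i = 0 \<or> \<kappa> i = 1"
  defines "C \<equiv> bottom_cluster A L \<kappa> i0"
  defines "m \<equiv> card C"
  shows "((\<forall>i\<in>C. \<kappa> i = 0) \<or>
          ((\<forall>i\<in>C. \<kappa> i = 1) \<and>
           (\<exists>j. C \<subseteq> top_cluster A L \<kappa> j \<and> card (top_cluster A L \<kappa> j) \<ge> m)))
      \<and> \<not> ((\<forall>i\<in>C. \<kappa> i = 0) \<and>
          ((\<forall>i\<in>C. \<kappa> i = 1) \<and>
           (\<exists>j. C \<subseteq> top_cluster A L \<kappa> j \<and> card (top_cluster A L \<kappa> j) \<ge> m)))"
proof -
  have "i0 \<in> C"
    unfolding C_def by (rule mem_bottom_cluster_self)
  have const: "\<kappa> i = \<kappa> i0" if "i \<in> C" for i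
    using that unfolding C_def by (rule bottom_cluster_kappa_eq)
  have not_both: "\<not> ((\<forall>i\<in>C. \<kappa> i = 0) \<and> (\<forall>i\<in>C. \<kappa> i = 1))"
    using \<open>i0 \<in> C\<close> by force
  consider "\<kappa> i0 = 0" | "\<kappa> i0 = 1"
    using assms(3) by blast
  then show ?thesis
  proof cases
    case 1
    then have "\<forall>i\<in>C. \<kappa> i = 0"
      using const by simp
    with not_both show ?thesis by blast
  next
    case 2
    then have "\<forall>i\<in>C. \<kappa> i = 1"
      using const by simp
    moreover have "C \<subseteq> top_cluster A L \<kappa> i0"
      unfolding C_def using 2 by (simp add: bottom_cluster_subset_top_cluster)
    moreover from this have "card (top_cluster A L \<kappa> i0) \<ge> m"
      unfolding m_def by (simp add: card_mono)
    ultimately show ?thesis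
      using not_both by blast
  qed
qed

end
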